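(* Let $n\ge 2$, $d\ge 1$, and $p\in\mathcal H(n,d)$. Then $$ d\le \frac{2N(p)-3}{n-1}. $$
   Context: $\mathcal H(n,d)$ is the set of real polynomials in $x_1,\dots,x_n$ of total degree exactly $d$, with all coefficients nonnegative, such that $p(x)=1$ whenever $\sum_{j=1}^n x_j=1$. $N(p)$ denotes the number of distinct monomials occurring with nonzero coefficient in $p$. *)

theory Defs
  imports Complex_Main "HOL-Library.Poly_Mapping"
begin

text \<open>Real polynomials in the variables x_0,...,x_{n-1} are represented as finitely
  supported maps from monomials (exponent vectors, themselves finitely supported
  maps nat to nat) to real coefficients.\<close>

type_synonym rpoly = "(nat \<Rightarrow>\<^sub>0 nat) \<Rightarrow>\<^sub>0 real"

definition mono_degree :: "(nat \<Rightarrow>\<^sub>0 nat) \<Rightarrow> nat" where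
  "mono_degree \<alpha> = (\<Sum>i\<in>Poly_Mapping.keys \<alpha>. Poly_Mapping.lookup \<alpha> i)"

definition poly_in_vars :: "nat \<Rightarrow> rpoly \<Rightarrow> bool" where
  "poly_in_vars n p \<longleftrightarrow> (\<forall>\<alpha>\<in>Poly_Mapping.keys p. Poly_Mapping.keys \<alpha> \<subseteq> {..<n})"

definition total_degree :: "rpoly \<Rightarrow> nat" where
  "total_degree p = Max (insert 0 (mono_degree ` Poly_Mapping.keys p))"

definition eval_poly :: "rpoly \<Rightarrow> (nat \<Rightarrow> real) \<Rightarrow> real" where
  "eval_poly p x = (\<Sum>\<alpha>\<in>Poly_Mapping.keys p. Poly_Mapping.lookup p \<alpha> * (\<Prod>i\<in>Poly_Mapping.keys \<alpha>. x i ^ Poly_Mapping.lookup \<alpha> i))"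

definition num_monomials :: "rpoly \<Rightarrow> nat" where
  "num_monomials p = card (Poly_Mapping.keys p)"

definition H_class :: "nat \<Rightarrow> nat \<Rightarrow> rpoly set" where
  "H_class n d = {p. poly_in_vars n p \<and> Poly_Mapping.keys p \<noteq> {} \<and> total_degree p = d
      \<and> (\<forall>\<alpha>. Poly_Mapping.lookup p \<alpha> \<ge> 0)
      \<and> (\<forall>x::nat \<Rightarrow> real. (\<Sum>j<n. x j) = 1 \<longrightarrow> eval_poly p x = 1)}"

end

theory Submission
  imports Defs "HOL-Computational_Algebra.Polynomial"
begin

text \<open>Put m = n - 1 and substitute x_i = (m choose i) (-t)^i / (1 - t)^m, which sums to 1 by the
  binomial theorem. Then p = 1 becomes the polynomial identity
  sum_k Q_k B^(d - k) = B^d with B = (1 - t)^m, where Q_k comes from the monomials of degree k of p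
  and has at most as many terms as there are such monomials. The remainders
  L_k = B^k - sum_(j <= k) Q_j B^(k - j) satisfy B L_k = L_(k+1) + Q_(k+1) and L_d = 0, and
  L_k \<noteq> 0 for k < d because every Q_k is nonnegative at t = -1.
  Now count sign changes of coefficient sequences: multiplying by 1 - t adds at least one (a
  discrete Rolle theorem), adding a polynomial with s terms removes at most 2 s, and a nonzero
  polynomial with s terms has fewer than s. Following L_0, ..., L_(d-1), Q_d gives
  m d + 3 \<le> 2 sum_k #terms(Q_k) \<le> 2 N(p).\<close>

section \<open>Sign changes of real sequences\<close>

text \<open>\<^term>\<open>sign_changes s xs\<close> counts the sign changes of \<^term>\<open>s # xs\<close> with zeros skipped;
  the state \<^term>\<open>s\<close> is the last nonzero entry seen, 0 if there is none.\<close>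

fun sign_changes :: "real \<Rightarrow> real list \<Rightarrow> nat" where
  "sign_changes s [] = 0"
| "sign_changes s (x # xs) =
     (if x = 0 then sign_changes s xs else (if s * x < 0 then 1 else 0) + sign_changes x xs)"

lemma sign_changes_sgn_cong: "sgn s = sgn s' \<Longrightarrow> sign_changes s xs = sign_changes s' xs"
  by (induction xs) (auto simp: mult_less_0_iff sgn_if split: if_splits)

lemma sign_changes_le_Suc: "sign_changes s xs \<le> sign_changes s' xs + 1"
  by (induction xs) (auto simp: mult_less_0_iff)

lemma sign_changes_state_le:
  "s' \<noteq> 0 \<Longrightarrow> sign_changes s xs \<le> sign_changes s' xs + (if s * s' < 0 then 1 else 0)"
  by (induction xs) (auto simp: mult_less_0_iff)

lemma sign_changes_Cons_ge: "sign_changes s xs \<le> sign_changes s (x # xs)"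
  using sign_changes_state_le[of x s xs] by auto

lemma sign_changes_Cons_le: "sign_changes s (x # xs) \<le> sign_changes s xs + 2"
  using sign_changes_le_Suc[of x xs s] by auto

lemma sign_changes_append_zeros:
  "\<forall>z\<in>set zs. z = 0 \<Longrightarrow> sign_changes s (xs @ zs) = sign_changes s xs"
proof (induction xs arbitrary: s)
  case Nil
  then show ?case by (induction zs) auto
qed simp

lemma sign_changes_strip_zeros:
  "sign_changes s (strip_while ((=) 0) xs) = sign_changes s xs"
proof -
  obtain ys zs where "strip_while ((=) 0) xs = ys" "\<forall>z\<in>set zs. 0 = z" "xs = ys @ zs"
    by (rule split_strip_while_append)
  then show ?thesis by (simp add: sign_changes_append_zeros)
qed

lemma sign_changes_update_le:
  "i < length xs \<Longrightarrow> sign_changes s (xs[i := y]) \<le> sign_changes s xs + 2"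
proof (induction xs arbitrary: i s)
  case (Cons x xs)
  show ?case
  proof (cases i)
    case 0
    then show ?thesis
      using sign_changes_Cons_le[of s y xs] sign_changes_Cons_ge[of s xs x] by simp
  next
    case (Suc j)
    then show ?thesis using Cons by auto
  qed
qed simp

lemma sign_changes_le_nonzeros: "sign_changes s xs \<le> length (filter (\<lambda>x. x \<noteq> 0) xs)"
  by (induction xs arbitrary: s) (auto simp: le_SucI)

lemma sign_changes_less_nonzeros:
  "\<exists>x\<in>set xs. x \<noteq> 0 \<Longrightarrow> sign_changes 0 xs < length (filter (\<lambda>x. x \<noteq> 0) xs)"
proof (induction xs)
  case (Cons x xs)
  then show ?case using sign_changes_le_nonzeros[of x xs] by auto
qed simp

fun successive_diffs :: "real \<Rightarrow> real list \<Rightarrow> real list" where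
  "successive_diffs a [] = [- a]"
| "successive_diffs a (x # xs) = (x - a) # successive_diffs x xs"

lemma Poly_successive_diffs:
  "Poly (successive_diffs a xs) = [:1, -1:] * Poly xs - [:a:]"
proof (induction xs arbitrary: a)
  case (Cons x xs)
  have "[:1, -1:] * pCons x p - [:a:] = pCons (x - a) ([:1, -1:] * p - [:x:])" for p :: "real poly"
    by (simp add: mult_pCons_left mult_pCons_right algebra_simps)
  then show ?case using Cons by simp
qed simp

lemma sign_changes_successive_diffs_Cons:
  assumes "a \<noteq> 0" and "x \<noteq> 0"
    and IH: "sign_changes x xs < sign_changes x (successive_diffs x xs)"
  shows "sign_changes a (x # xs) < sign_changes a (successive_diffs a (x # xs))"
proof -
  have "x = a \<or> sgn (x - a) = sgn x \<or> (a * x > 0 \<and> a * (x - a) < 0)"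
    using \<open>x \<noteq> 0\<close> by (cases "x - a > 0"; cases "x > 0"; cases "a > 0")
      (auto simp: sgn_if mult_pos_pos mult_neg_neg mult_pos_neg mult_neg_pos)
  then consider "x = a" | "sgn (x - a) = sgn x" | "a * x > 0" "a * (x - a) < 0"
    by blast
  then show ?thesis
  proof cases
    case 1
    then show ?thesis using IH \<open>x \<noteq> 0\<close> by (simp add: mult_less_0_iff)
  next
    case 2
    then show ?thesis using IH \<open>x \<noteq> 0\<close> sign_changes_sgn_cong[OF 2, of "successive_diffs x xs"]
      by (auto simp: mult_less_0_iff sgn_if split: if_splits)
  next
    case 3
    then show ?thesis using IH sign_changes_le_Suc[of x "successive_diffs x xs" "x - a"] \<open>x \<noteq> 0\<close>
      by auto
  qed
qed

text \<open>A discrete Rolle theorem. The first conjunct, where the state is the entry preceding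
  \<^term>\<open>xs\<close>, is what makes the induction go through.\<close>

lemma sign_changes_successive_diffs:
  "(a \<noteq> 0 \<longrightarrow> sign_changes a xs < sign_changes a (successive_diffs a xs)) \<and>
   ((\<exists>x\<in>set xs. x \<noteq> 0) \<longrightarrow> sign_changes s xs < sign_changes s (successive_diffs 0 xs))"
proof (induction xs arbitrary: a s)
  case Nil
  then show ?case by (simp add: mult_less_0_iff)
next
  case (Cons x xs)
  have nonzero_state: "sign_changes a (x # xs) < sign_changes a (successive_diffs a (x # xs))"
    if "a \<noteq> 0"
  proof (cases "x = 0")
    case True
    have "sign_changes a xs \<le> sign_changes (- a) (successive_diffs 0 xs)"
    proof (cases "\<exists>x\<in>set xs. x \<noteq> 0")
      case True
      then have "sign_changes (- a) xs < sign_changes (- a) (successive_diffs 0 xs)"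
        using Cons.IH by blast
      then show ?thesis using sign_changes_le_Suc[of a xs "- a"] by linarith
    next
      case False
      then show ?thesis using sign_changes_append_zeros[of xs a "[]"] by auto
    qed
    then show ?thesis using \<open>x = 0\<close> \<open>a \<noteq> 0\<close> by (simp add: mult_less_0_iff)
  next
    case False
    then show ?thesis
      using Cons.IH \<open>a \<noteq> 0\<close> by (intro sign_changes_successive_diffs_Cons) auto
  qed
  have zero_state: "sign_changes s (x # xs) < sign_changes s (successive_diffs 0 (x # xs))"
    if "\<exists>x\<in>set (x # xs). x \<noteq> 0"
    using that Cons.IH[of x s] by (cases "x = 0") auto
  show ?case using nonzero_state zero_state by blast
qed

section \<open>Sign changes of coefficient sequences\<close>

definition coeff_sign_changes :: "real poly \<Rightarrow> nat" where
  "coeff_sign_changes f = sign_changes 0 (coeffs f)"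

definition num_terms :: "'a::zero poly \<Rightarrow> nat" where
  "num_terms f = card {i. coeff f i \<noteq> 0}"

lemma coeff_sign_changes_Poly: "coeff_sign_changes (Poly xs) = sign_changes 0 xs"
  by (simp add: coeff_sign_changes_def sign_changes_strip_zeros)

lemma coeff_sign_changes_eq_upt:
  assumes "degree f < N"
  shows "coeff_sign_changes f = sign_changes 0 (map (coeff f) [0..<N])"
proof -
  have "Poly (map (coeff f) [0..<N]) = f"
    using assms by (intro poly_eqI) (auto simp: nth_default_def coeff_eq_0)
  then show ?thesis by (metis coeff_sign_changes_Poly)
qed

lemma coeff_sign_changes_mult_one_minus_X:
  assumes "f \<noteq> 0"
  shows "coeff_sign_changes f < coeff_sign_changes ([:1, -1:] * f)"
proof -
  have "\<exists>x\<in>set (coeffs f). x \<noteq> 0"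
    using assms coeff_in_coeffs[of f "degree f"] leading_coeff_neq_0 by blast
  then have "sign_changes 0 (coeffs f) < sign_changes 0 (successive_diffs 0 (coeffs f))"
    using sign_changes_successive_diffs by blast
  moreover have "[:1, -1:] * f = Poly (successive_diffs 0 (coeffs f))"
    by (simp add: Poly_successive_diffs)
  ultimately show ?thesis
    unfolding coeff_sign_changes_def[of f] by (simp only: coeff_sign_changes_Poly)
qed

lemma coeff_sign_changes_mult_power_one_minus_X:
  "f \<noteq> 0 \<Longrightarrow> coeff_sign_changes f + m \<le> coeff_sign_changes ([:1, -1:] ^ m * f)"
proof (induction m)
  case (Suc m)
  have "[:1, -1:] ^ m * f \<noteq> 0" using Suc.prems by simp
  then have "coeff_sign_changes ([:1, -1:] ^ m * f) < coeff_sign_changes ([:1, -1:] ^ Suc m * f)"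
    using coeff_sign_changes_mult_one_minus_X by (simp only: power_Suc mult.assoc)
  then show ?case using Suc by simp
qed simp

lemma coeff_sign_changes_add_monom:
  "coeff_sign_changes (f + monom c k) \<le> coeff_sign_changes f + 2"
proof -
  define N where "N = Suc (max k (degree f))"
  have "degree (f + monom c k) < N"
    unfolding N_def by (intro le_imp_less_Suc degree_add_le) (auto intro: order.trans[OF degree_monom_le])
  then have "coeff_sign_changes (f + monom c k)
      = sign_changes 0 ((map (coeff f) [0..<N])[k := coeff f k + c])"
    by (subst coeff_sign_changes_eq_upt) (auto simp: N_def
        intro!: arg_cong[where f = "sign_changes 0"] nth_equalityI simp del: upt_Suc)
  also have "\<dots> \<le> sign_changes 0 (map (coeff f) [0..<N]) + 2"
    by (rule sign_changes_update_le) (simp add: N_def)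
  also have "sign_changes 0 (map (coeff f) [0..<N]) = coeff_sign_changes f"
    by (rule coeff_sign_changes_eq_upt[symmetric]) (simp add: N_def)
  finally show ?thesis .
qed

lemma coeff_sign_changes_add_sum_monom:
  "finite S \<Longrightarrow> coeff_sign_changes (f + (\<Sum>i\<in>S. monom (c i) i)) \<le> coeff_sign_changes f + 2 * card S"
proof (induction S rule: finite_induct)
  case (insert k S)
  have "f + (\<Sum>i\<in>insert k S. monom (c i) i) = (f + (\<Sum>i\<in>S. monom (c i) i)) + monom (c k) k"
    using insert by (simp add: algebra_simps)
  then have "coeff_sign_changes (f + (\<Sum>i\<in>insert k S. monom (c i) i))
      \<le> coeff_sign_changes (f + (\<Sum>i\<in>S. monom (c i) i)) + 2"
    by (simp only: coeff_sign_changes_add_monom)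
  then show ?case using insert by simp
qed simp

lemma finite_nonzero_coeffs: "finite {i. coeff f i \<noteq> 0}"
  by (rule finite_subset[of _ "{..degree f}"]) (auto intro: le_degree)

lemma sum_monom_nonzero_coeffs: "(\<Sum>i | coeff f i \<noteq> 0. monom (coeff f i) i) = f"
  by (rule poly_eqI) (auto simp: coeff_sum coeff_monom finite_nonzero_coeffs)

lemma coeff_sign_changes_add:
  "coeff_sign_changes (f + g) \<le> coeff_sign_changes f + 2 * num_terms g"
  using coeff_sign_changes_add_sum_monom[where S = "{i. coeff g i \<noteq> 0}" and c = "coeff g"]
  by (simp add: finite_nonzero_coeffs sum_monom_nonzero_coeffs num_terms_def)

lemma coeff_sign_changes_less_num_terms:
  assumes "f \<noteq> 0"
  shows "coeff_sign_changes f < num_terms f"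
proof -
  have "\<exists>x\<in>set (coeffs f). x \<noteq> 0"
    using assms coeff_in_coeffs[of f "degree f"] leading_coeff_neq_0 by blast
  then have "coeff_sign_changes f < length (filter (\<lambda>x. x \<noteq> 0) (coeffs f))"
    unfolding coeff_sign_changes_def by (rule sign_changes_less_nonzeros)
  also have "\<dots> = card {i. i < length (coeffs f) \<and> coeffs f ! i \<noteq> 0}"
    by (rule length_filter_conv_card)
  also have "{i. i < length (coeffs f) \<and> coeffs f ! i \<noteq> 0} = {i. coeff f i \<noteq> 0}"
    using assms by (auto simp: length_coeffs coeffs_nth le_degree less_Suc_eq_le)
  finally show ?thesis unfolding num_terms_def .
qed

lemma num_terms_sum_monom_le:
  assumes "finite A"
  shows "num_terms (\<Sum>x\<in>A. monom (c x) (e x)) \<le> card A"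
proof -
  have "{i. coeff (\<Sum>x\<in>A. monom (c x) (e x)) i \<noteq> 0} \<subseteq> e ` A"
    by (auto simp: coeff_sum elim!: sum.not_neutral_contains_not_neutral split: if_splits)
  then have "num_terms (\<Sum>x\<in>A. monom (c x) (e x)) \<le> card (e ` A)"
    unfolding num_terms_def using assms by (intro card_mono) auto
  also have "\<dots> \<le> card A"
    using assms by (rule card_image_le)
  finally show ?thesis .
qed

lemma num_terms_bound_from_chain:
  fixes L Q :: "nat \<Rightarrow> real poly"
  assumes "m \<ge> 1" and "d \<ge> 1"
    and nonzero: "\<And>k. k < d \<Longrightarrow> L k \<noteq> 0"
    and step: "\<And>k. k < d \<Longrightarrow> [:1, -1:] ^ m * L k = L (Suc k) + Q (Suc k)"
    and "L d = 0"
  shows "m * d + 3 \<le> 2 * (\<Sum>k\<in>{1..d}. num_terms (Q k))"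
proof -
  obtain d' where d: "d = Suc d'" using \<open>d \<ge> 1\<close> by (cases d) auto
  have chain: "m * i \<le> coeff_sign_changes (L i) + 2 * (\<Sum>k\<in>{1..i}. num_terms (Q k))"
    if "i \<le> d'" for i
    using that
  proof (induction i)
    case (Suc i)
    have "coeff_sign_changes (L i) + m \<le> coeff_sign_changes ([:1, -1:] ^ m * L i)"
      using nonzero Suc.prems d by (intro coeff_sign_changes_mult_power_one_minus_X) auto
    also have "\<dots> \<le> coeff_sign_changes (L (Suc i)) + 2 * num_terms (Q (Suc i))"
      using step[of i] Suc.prems d coeff_sign_changes_add by simp
    finally show ?case using Suc by simp
  qed simp
  have top: "[:1, -1:] ^ m * L d' = Q d"
    using step[of d'] \<open>L d = 0\<close> d by simp
  have "L d' \<noteq> 0" using nonzero d by simp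
  then have "coeff_sign_changes (L d') + m \<le> coeff_sign_changes (Q d)"
    unfolding top[symmetric] by (rule coeff_sign_changes_mult_power_one_minus_X)
  moreover have "coeff_sign_changes (Q d) < num_terms (Q d)"
    using \<open>L d' \<noteq> 0\<close> top by (intro coeff_sign_changes_less_num_terms) auto
  moreover have "(\<Sum>k\<in>{1..d}. num_terms (Q k)) = (\<Sum>k\<in>{1..d'}. num_terms (Q k)) + num_terms (Q d)"
    using d by simp
  moreover have "m * d = m * d' + m" using d by simp
  ultimately show ?thesis
    using chain[of d'] \<open>m \<ge> 1\<close> by linarith
qed

lemma power_sum_remainder:
  fixes B :: "'a::comm_ring_1" and Q :: "nat \<Rightarrow> 'a"
  assumes identity: "(\<Sum>j\<le>d. Q j * B ^ (d - j)) = B ^ d" and "k \<le> d"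
  shows "B ^ (d - k) * (B ^ k - (\<Sum>j\<le>k. Q j * B ^ (k - j))) = (\<Sum>j\<in>{k<..d}. Q j * B ^ (d - j))"
proof -
  have "B ^ (d - k) * (\<Sum>j\<le>k. Q j * B ^ (k - j)) = (\<Sum>j\<le>k. Q j * B ^ (d - j))"
    unfolding sum_distrib_left
  proof (rule sum.cong)
    fix j assume "j \<in> {..k}"
    then have "d - j = (d - k) + (k - j)" using \<open>k \<le> d\<close> by auto
    then show "B ^ (d - k) * (Q j * B ^ (k - j)) = Q j * B ^ (d - j)"
      by (simp add: power_add mult.left_commute)
  qed simp
  moreover have "(\<Sum>j\<le>d. Q j * B ^ (d - j)) = (\<Sum>j\<in>{k<..d}. Q j * B ^ (d - j)) + (\<Sum>j\<le>k. Q j * B ^ (d - j))"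
    using \<open>k \<le> d\<close> by (subst sum.subset_diff[of "{..k}"]) (auto intro!: sum.cong)
  moreover have "B ^ (d - k) * B ^ k = B ^ d"
    using \<open>k \<le> d\<close> by (simp flip: power_add)
  ultimately show ?thesis
    using identity by (simp add: right_diff_distrib)
qed

lemma num_terms_bound_from_identity:
  fixes Q :: "nat \<Rightarrow> real poly" and m d :: nat
  defines "B \<equiv> [:1, -1:] ^ m"
  assumes "m \<ge> 1" and "d \<ge> 1"
    and identity: "(\<Sum>k\<le>d. Q k * B ^ (d - k)) = B ^ d"
    and nonneg: "\<And>k. k \<le> d \<Longrightarrow> poly (Q k) (-1) \<ge> 0"
    and pos: "poly (Q d) (-1) > 0"
  shows "m * d + 3 \<le> 2 * (\<Sum>k\<le>d. num_terms (Q k))"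
proof -
  define L where "L k = B ^ k - (\<Sum>j\<le>k. Q j * B ^ (k - j))" for k
  have tail: "B ^ (d - k) * L k = (\<Sum>j\<in>{k<..d}. Q j * B ^ (d - j))" if "k \<le> d" for k
    unfolding L_def using identity that by (rule power_sum_remainder)
  have recurrence: "B * L k = L (Suc k) + Q (Suc k)" for k
  proof -
    have "B * (\<Sum>j\<le>k. Q j * B ^ (k - j)) = (\<Sum>j\<le>k. Q j * B ^ (Suc k - j))"
      by (auto simp: sum_distrib_left Suc_diff_le algebra_simps intro!: sum.cong)
    then show ?thesis unfolding L_def by (simp add: algebra_simps)
  qed
  have "L d = 0" using tail[of d] by simp
  have nonzero: "L k \<noteq> 0" if "k < d" for k
  proof
    assume "L k = 0"
    have "0 < poly (Q d) (-1) * poly B (-1) ^ (d - d)"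
      using pos by simp
    also have "\<dots> \<le> (\<Sum>j\<in>{k<..d}. poly (Q j) (-1) * poly B (-1) ^ (d - j))"
      using that nonneg by (intro member_le_sum) (auto simp: B_def)
    also have "\<dots> = poly (B ^ (d - k) * L k) (-1)"
      using tail[of k] that by (simp add: poly_sum)
    finally show False using \<open>L k = 0\<close> by simp
  qed
  have "m * d + 3 \<le> 2 * (\<Sum>k\<in>{1..d}. num_terms (Q k))"
    using \<open>m \<ge> 1\<close> \<open>d \<ge> 1\<close> nonzero recurrence \<open>L d = 0\<close>
    by (intro num_terms_bound_from_chain[where L = L]) (auto simp: B_def)
  also have "\<dots> \<le> 2 * (\<Sum>k\<le>d. num_terms (Q k))"
    by (intro mult_le_mono2 sum_mono2) auto
  finally show ?thesis .
qed

section \<open>The binomial substitution\<close>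

lemma poly_eq_off_point:
  fixes f g :: "real poly"
  assumes "\<And>t. t \<noteq> c \<Longrightarrow> poly f t = poly g t"
  shows "f = g"
proof (rule ccontr)
  assume "f \<noteq> g"
  then have "finite {t. poly (f - g) t = 0}"
    by (intro poly_roots_finite) simp
  moreover have "- {c} \<subseteq> {t. poly (f - g) t = 0}"
    using assms by auto
  moreover have "infinite (- {c})"
    using infinite_UNIV_char_0 by (simp add: Compl_eq_Diff_UNIV)
  ultimately show False
    using finite_subset by blast
qed

lemma mono_degree_le_total_degree:
  "\<alpha> \<in> Poly_Mapping.keys p \<Longrightarrow> mono_degree \<alpha> \<le> total_degree p"
  unfolding total_degree_def by (intro Max_ge) auto

lemma total_degree_attained:
  assumes "Poly_Mapping.keys p \<noteq> {}"
  shows "\<exists>\<alpha>\<in>Poly_Mapping.keys p. mono_degree \<alpha> = total_degree p"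
proof -
  have "total_degree p = Max (mono_degree ` Poly_Mapping.keys p)"
    using assms unfolding total_degree_def by (simp add: Max_insert)
  also have "\<dots> \<in> mono_degree ` Poly_Mapping.keys p"
    using assms by (intro Max_in) auto
  finally show ?thesis by auto
qed

definition binomial_weight :: "nat \<Rightarrow> (nat \<Rightarrow>\<^sub>0 nat) \<Rightarrow> real" where
  "binomial_weight m \<alpha> = (\<Prod>i\<in>Poly_Mapping.keys \<alpha>. real (m choose i) ^ Poly_Mapping.lookup \<alpha> i)"

definition weighted_degree :: "(nat \<Rightarrow>\<^sub>0 nat) \<Rightarrow> nat" where
  "weighted_degree \<alpha> = (\<Sum>i\<in>Poly_Mapping.keys \<alpha>. i * Poly_Mapping.lookup \<alpha> i)"

lemma prod_binomial_substitution:
  "(\<Prod>i\<in>Poly_Mapping.keys \<alpha>. (real (m choose i) * s ^ i / b) ^ Poly_Mapping.lookup \<alpha> i)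
     = binomial_weight m \<alpha> * s ^ weighted_degree \<alpha> / b ^ mono_degree \<alpha>"
  by (simp add: binomial_weight_def weighted_degree_def mono_degree_def power_mult_distrib
      power_divide power_mult prod_dividef prod.distrib power_sum)

text \<open>Under x_i = (m choose i) (-t)^i / b a monomial \<^term>\<open>\<alpha>\<close> becomes
  \<^term>\<open>binomial_weight m \<alpha>\<close> (-t)^(\<^term>\<open>weighted_degree \<alpha>\<close>) / b^(\<^term>\<open>mono_degree \<alpha>\<close>);
  \<^term>\<open>degree_slice m p k\<close> collects these numerators over the monomials of degree k.\<close>

definition degree_slice :: "nat \<Rightarrow> rpoly \<Rightarrow> nat \<Rightarrow> real poly" where
  "degree_slice m p k = (\<Sum>\<alpha>\<in>{\<alpha> \<in> Poly_Mapping.keys p. mono_degree \<alpha> = k}.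
     monom (Poly_Mapping.lookup p \<alpha> * binomial_weight m \<alpha> * (-1) ^ weighted_degree \<alpha>) (weighted_degree \<alpha>))"

lemma poly_degree_slice:
  "poly (degree_slice m p k) t = (\<Sum>\<alpha>\<in>{\<alpha> \<in> Poly_Mapping.keys p. mono_degree \<alpha> = k}.
     Poly_Mapping.lookup p \<alpha> * binomial_weight m \<alpha> * (- t) ^ weighted_degree \<alpha>)"
  by (simp add: degree_slice_def poly_sum poly_monom power_minus[of t] mult.assoc)

lemma H_class_binomial_substitution:
  assumes p: "p \<in> H_class (Suc m) d" and "t \<noteq> 1"
  shows "(\<Sum>\<alpha>\<in>Poly_Mapping.keys p. Poly_Mapping.lookup p \<alpha> * binomial_weight m \<alpha>
      * (- t) ^ weighted_degree \<alpha> / ((1 - t) ^ m) ^ mono_degree \<alpha>) = 1"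
proof -
  define b where "b = (1 - t) ^ m"
  have "b \<noteq> 0" using \<open>t \<noteq> 1\<close> by (simp add: b_def)
  define x where "x i = real (m choose i) * (- t) ^ i / b" for i
  have "(\<Sum>i<Suc m. x i) = (\<Sum>i\<le>m. real (m choose i) * (- t) ^ i * 1 ^ (m - i)) / b"
    by (simp add: x_def lessThan_Suc_atMost sum_divide_distrib)
  also have "\<dots> = (- t + 1) ^ m / b"
    by (simp only: binomial_ring)
  also have "\<dots> = 1"
    using \<open>b \<noteq> 0\<close> by (simp add: b_def)
  finally have "eval_poly p x = 1"
    using p by (simp add: H_class_def)
  then show ?thesis
    by (simp add: eval_poly_def x_def b_def prod_binomial_substitution mult.assoc)
qed

lemma degree_slice_identity:
  assumes p: "p \<in> H_class (Suc m) d"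
  shows "(\<Sum>k\<le>d. degree_slice m p k * ([:1, -1:] ^ m) ^ (d - k)) = ([:1, -1:] ^ m) ^ d"
proof (rule poly_eq_off_point)
  fix t :: real
  assume "t \<noteq> 1"
  define b where "b = (1 - t) ^ m"
  have "b \<noteq> 0" using \<open>t \<noteq> 1\<close> by (simp add: b_def)
  have "b ^ d = (\<Sum>\<alpha>\<in>Poly_Mapping.keys p. Poly_Mapping.lookup p \<alpha> * binomial_weight m \<alpha>
      * (- t) ^ weighted_degree \<alpha> / b ^ mono_degree \<alpha>) * b ^ d"
    using H_class_binomial_substitution[OF p \<open>t \<noteq> 1\<close>] by (simp add: b_def)
  also have "\<dots> = (\<Sum>\<alpha>\<in>Poly_Mapping.keys p. Poly_Mapping.lookup p \<alpha> * binomial_weight m \<alpha>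
      * (- t) ^ weighted_degree \<alpha> * b ^ (d - mono_degree \<alpha>))"
    unfolding sum_distrib_right
  proof (rule sum.cong)
    fix \<alpha> assume "\<alpha> \<in> Poly_Mapping.keys p"
    then have "mono_degree \<alpha> \<le> d"
      using p mono_degree_le_total_degree by (auto simp: H_class_def)
    then have "b ^ d = b ^ mono_degree \<alpha> * b ^ (d - mono_degree \<alpha>)"
      by (simp add: power_add[symmetric])
    then show "Poly_Mapping.lookup p \<alpha> * binomial_weight m \<alpha> * (- t) ^ weighted_degree \<alpha>
        / b ^ mono_degree \<alpha> * b ^ d = Poly_Mapping.lookup p \<alpha> * binomial_weight m \<alpha>
        * (- t) ^ weighted_degree \<alpha> * b ^ (d - mono_degree \<alpha>)"
      using \<open>b \<noteq> 0\<close> by simp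
  qed simp
  also have "\<dots> = (\<Sum>k\<le>d. \<Sum>\<alpha>\<in>{\<alpha> \<in> Poly_Mapping.keys p. mono_degree \<alpha> = k}.
      Poly_Mapping.lookup p \<alpha> * binomial_weight m \<alpha> * (- t) ^ weighted_degree \<alpha>
      * b ^ (d - mono_degree \<alpha>))"
    using p mono_degree_le_total_degree
    by (intro sum.group[symmetric]) (auto simp: H_class_def)
  also have "\<dots> = (\<Sum>k\<le>d. poly (degree_slice m p k) t * b ^ (d - k))"
    by (auto simp: poly_degree_slice sum_distrib_right intro!: sum.cong)
  finally show "poly (\<Sum>k\<le>d. degree_slice m p k * ([:1, -1:] ^ m) ^ (d - k)) t
      = poly (([:1, -1:] ^ m) ^ d) t"
    by (simp add: poly_sum poly_power b_def)
qed

lemma poly_degree_slice_minus_one: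
  "poly (degree_slice m p k) (-1) = (\<Sum>\<alpha>\<in>{\<alpha> \<in> Poly_Mapping.keys p. mono_degree \<alpha> = k}.
     Poly_Mapping.lookup p \<alpha> * binomial_weight m \<alpha>)"
  by (simp add: poly_degree_slice)

lemma H_class_weighted_coeff_pos:
  assumes "p \<in> H_class (Suc m) d" and "\<alpha> \<in> Poly_Mapping.keys p"
  shows "Poly_Mapping.lookup p \<alpha> * binomial_weight m \<alpha> > 0"
proof -
  have "Poly_Mapping.lookup p \<alpha> > 0"
    using assms by (auto simp: H_class_def in_keys_iff order_le_less)
  moreover have "Poly_Mapping.keys \<alpha> \<subseteq> {..<Suc m}"
    using assms unfolding H_class_def poly_in_vars_def by blast
  then have "binomial_weight m \<alpha> > 0"
    unfolding binomial_weight_def by (intro prod_pos) (auto simp: subset_iff less_Suc_eq_le)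
  ultimately show ?thesis by simp
qed

lemma degree_slice_nonneg:
  "p \<in> H_class (Suc m) d \<Longrightarrow> poly (degree_slice m p k) (-1) \<ge> 0"
  unfolding poly_degree_slice_minus_one
  by (intro sum_nonneg less_imp_le H_class_weighted_coeff_pos) auto

lemma degree_slice_top_pos:
  assumes "p \<in> H_class (Suc m) d"
  shows "poly (degree_slice m p d) (-1) > 0"
proof -
  have "Poly_Mapping.keys p \<noteq> {}" and "total_degree p = d"
    using assms by (simp_all add: H_class_def)
  then obtain \<alpha> where "\<alpha> \<in> Poly_Mapping.keys p" "mono_degree \<alpha> = d"
    using total_degree_attained by blast
  then show ?thesis
    unfolding poly_degree_slice_minus_one using assms
    by (intro sum_pos2[where i = \<alpha>] less_imp_le H_class_weighted_coeff_pos) auto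
qed

lemma sum_num_terms_degree_slice_le:
  assumes "total_degree p \<le> d"
  shows "(\<Sum>k\<le>d. num_terms (degree_slice m p k)) \<le> num_monomials p"
proof -
  have "(\<Sum>k\<le>d. num_terms (degree_slice m p k))
      \<le> (\<Sum>k\<le>d. card {\<alpha> \<in> Poly_Mapping.keys p. mono_degree \<alpha> = k})"
    unfolding degree_slice_def by (intro sum_mono num_terms_sum_monom_le) auto
  also have "\<dots> = num_monomials p"
    unfolding num_monomials_def card_eq_sum
    using assms mono_degree_le_total_degree by (intro sum.group) fastforce+
  finally show ?thesis .
qed

theorem proposition4:
  fixes n d :: nat and p :: rpoly
  assumes "n \<ge> 2" and "d \<ge> 1" and "p \<in> H_class n d"
  shows "real d \<le> (2 * real (num_monomials p) - 3) / (real n - 1)"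
proof -
  obtain m where n: "n = Suc m" and "m \<ge> 1"
    using \<open>n \<ge> 2\<close> by (cases n) auto
  have p: "p \<in> H_class (Suc m) d"
    using assms n by simp
  have "m * d + 3 \<le> 2 * (\<Sum>k\<le>d. num_terms (degree_slice m p k))"
    using \<open>m \<ge> 1\<close> \<open>d \<ge> 1\<close> degree_slice_identity[OF p]
      degree_slice_nonneg[OF p] degree_slice_top_pos[OF p]
    by (rule num_terms_bound_from_identity)
  also have "\<dots> \<le> 2 * num_monomials p"
    using p sum_num_terms_degree_slice_le by (simp add: H_class_def)
  finally have "real m * real d + 3 \<le> 2 * real (num_monomials p)"
    by (simp flip: of_nat_mult of_nat_add)
  then show ?thesis
    using n \<open>m \<ge> 1\<close> by (simp add: field_simps)
qed

end
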